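(* Let $H$ be a finite simple graph with $n=|V(H)|\ge1$ vertices, chromatic number $\chi=\chi(H)$, and $m'(H)$ non-edges. Then $$\left\lceil \frac{n}{\chi} \right\rceil \left( n - \frac{\chi}{2}\left\lceil\frac{n}{\chi}-1\right\rceil\right) = n+m'(H)$$ holds if and only if $H$ is a Turán graph.
   Context: All graphs are finite and simple. A non-edge of $H$ is an unordered pair of distinct non-adjacent vertices. The Turán graph $T(n,r)$ is the complete $r$-partite graph on $n$ vertices whose $r$ classes have sizes as equal as possible (any two class sizes differ by at most one); a Turán graph is a graph isomorphic to some $T(n,r)$. *)

theory Defs
  imports Complex_Main
begin

definition simple_graph :: "'a set \<Rightarrow> ('a \<Rightarrow> 'a \<Rightarrow> bool) \<Rightarrow> bool" where
  "simple_graph V E \<longleftrightarrow> finite V \<and> (\<forall>x y. E x y \<longrightarrow> x \<in> V \<and> y \<in> V)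
     \<and> (\<forall>x y. E x y \<longrightarrow> E y x) \<and> (\<forall>x. \<not> E x x)"

definition proper_colouring :: "'a set \<Rightarrow> ('a \<Rightarrow> 'a \<Rightarrow> bool) \<Rightarrow> nat \<Rightarrow> ('a \<Rightarrow> nat) \<Rightarrow> bool" where
  "proper_colouring V E k c \<longleftrightarrow> (\<forall>v\<in>V. c v < k) \<and> (\<forall>x\<in>V. \<forall>y\<in>V. E x y \<longrightarrow> c x \<noteq> c y)"

definition chromatic_number :: "'a set \<Rightarrow> ('a \<Rightarrow> 'a \<Rightarrow> bool) \<Rightarrow> nat" where
  "chromatic_number V E = (LEAST k. \<exists>c. proper_colouring V E k c)"

definition non_edges :: "'a set \<Rightarrow> ('a \<Rightarrow> 'a \<Rightarrow> bool) \<Rightarrow> 'a set set" where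
  "non_edges V E = {{x, y} | x y. x \<in> V \<and> y \<in> V \<and> x \<noteq> y \<and> \<not> E x y}"

text \<open>H is a Turan graph: isomorphic to T(n,r) for some r \<ge> 1, i.e. V splits into r
  classes (indexed 0..<r) with sizes pairwise differing by at most one, and two distinct
  vertices are adjacent iff they lie in different classes.\<close>
definition turan_graph :: "'a set \<Rightarrow> ('a \<Rightarrow> 'a \<Rightarrow> bool) \<Rightarrow> bool" where
  "turan_graph V E \<longleftrightarrow> (\<exists>r::nat. \<exists>c::'a \<Rightarrow> nat. r \<ge> 1 \<and> (\<forall>v\<in>V. c v < r)
     \<and> (\<forall>i<r. \<forall>j<r. card {v\<in>V. c v = i} \<le> card {v\<in>V. c v = j} + 1)
     \<and> (\<forall>x\<in>V. \<forall>y\<in>V. x \<noteq> y \<longrightarrow> (E x y \<longleftrightarrow> c x \<noteq> c y)))"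

end

theory Submission
  imports Defs
begin

text \<open>Properly colour \<open>H\<close> with \<open>k = \<chi>\<close> colours, with class sizes \<open>s\<^sub>i\<close>, and put \<open>t = \<lceil>n/k\<rceil>\<close>.
  Pairs inside a colour class are non-edges, so \<open>2 m'(H) \<ge> \<Sum> s\<^sub>i(s\<^sub>i - 1)\<close>, and the identity
  \<open>s(s - 1) = 2(t - 1)s - t(t - 1) + (s - t)(s - t + 1)\<close> turns the right-hand side into the
  left-hand side of the theorem (minus \<open>n\<close>, doubled) plus \<open>\<Sum> (s\<^sub>i - t)(s\<^sub>i - t + 1)\<close>, a sum of
  non-negative integers. Hence equality holds iff every \<open>s\<^sub>i\<close> lies in \<open>{t - 1, t}\<close>, i.e. the
  colouring is balanced, and every non-edge lies inside a class, i.e. \<open>H\<close> is complete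
  multipartite on the classes: \<open>H\<close> is a Turan graph. Conversely, the chromatic number of a
  Turan graph is its number of non-empty classes, since representatives of the classes form
  a clique.\<close>

definition balanced_colouring :: "'a set \<Rightarrow> nat \<Rightarrow> ('a \<Rightarrow> nat) \<Rightarrow> bool" where
  "balanced_colouring V k c \<longleftrightarrow>
     (\<forall>i<k. \<forall>j<k. card {v\<in>V. c v = i} \<le> card {v\<in>V. c v = j} + 1)"

definition non_adjacent_same_colour :: "'a set \<Rightarrow> ('a \<Rightarrow> 'a \<Rightarrow> bool) \<Rightarrow> ('a \<Rightarrow> nat) \<Rightarrow> bool" where
  "non_adjacent_same_colour V E c \<longleftrightarrow> (\<forall>x\<in>V. \<forall>y\<in>V. x \<noteq> y \<longrightarrow> \<not> E x y \<longrightarrow> c x = c y)"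

text \<open>Twice the number of non-edges of \<open>T(n, k)\<close>.\<close>
definition double_turan_non_edges :: "nat \<Rightarrow> nat \<Rightarrow> int" where
  "double_turan_non_edges n k =
     (let t = \<lceil>real n / real k\<rceil> in (t - 1) * (2 * int n) - int k * t * (t - 1))"

lemma turan_graph_iff_balanced_multipartite:
  assumes "simple_graph V E"
  shows "turan_graph V E \<longleftrightarrow> (\<exists>r c. r \<ge> 1 \<and> proper_colouring V E r c
           \<and> balanced_colouring V r c \<and> non_adjacent_same_colour V E c)"
proof -
  have irrefl: "\<And>x y. E x y \<Longrightarrow> x \<noteq> y" using assms unfolding simple_graph_def by blast
  have "(\<forall>x\<in>V. \<forall>y\<in>V. x \<noteq> y \<longrightarrow> (E x y \<longleftrightarrow> c x \<noteq> c y)) \<longleftrightarrow>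
        (\<forall>x\<in>V. \<forall>y\<in>V. E x y \<longrightarrow> c x \<noteq> c y) \<and> non_adjacent_same_colour V E c" for c :: "'a \<Rightarrow> nat"
    unfolding non_adjacent_same_colour_def using irrefl by blast
  then show ?thesis
    unfolding turan_graph_def proper_colouring_def balanced_colouring_def by auto
qed

lemma sum_card_colour_classes:
  fixes c :: "'a \<Rightarrow> nat"
  assumes "finite V" "\<forall>v\<in>V. c v < k"
  shows "(\<Sum>i<k. card {v\<in>V. c v = i}) = card V"
proof -
  have "V = (\<Union>i<k. {v\<in>V. c v = i})" using assms(2) by auto
  also have "card \<dots> = (\<Sum>i<k. card {v\<in>V. c v = i})"
    using assms(1) by (intro card_UN_disjoint) auto
  finally show ?thesis by simp
qed

lemma card_same_colour_pairs:
  fixes c :: "'a \<Rightarrow> nat"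
  assumes "finite V" "\<forall>v\<in>V. c v < k"
  shows "card {{x, y} | x y. x \<in> V \<and> y \<in> V \<and> x \<noteq> y \<and> c x = c y}
           = (\<Sum>i<k. card {v\<in>V. c v = i} choose 2)"
proof -
  let ?P = "\<lambda>i. {B. B \<subseteq> {v\<in>V. c v = i} \<and> card B = 2}"
  have "{{x, y} | x y. x \<in> V \<and> y \<in> V \<and> x \<noteq> y \<and> c x = c y} = (\<Union>i<k. ?P i)"
    using assms(2) by (fastforce simp: card_2_iff)
  moreover have "card (\<Union>i<k. ?P i) = (\<Sum>i<k. card (?P i))"
  proof (rule card_UN_disjoint)
    show "\<forall>i\<in>{..<k}. finite (?P i)"
      using assms(1) by (auto intro: finite_subset[of _ "Pow V"])
    show "\<forall>i\<in>{..<k}. \<forall>j\<in>{..<k}. i \<noteq> j \<longrightarrow> ?P i \<inter> ?P j = {}"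
      by (fastforce simp: card_2_iff)
  qed simp
  moreover have "card (?P i) = card {v\<in>V. c v = i} choose 2" for i
    using n_subsets[of "{v\<in>V. c v = i}" 2] assms(1) by simp
  ultimately show ?thesis by simp
qed

lemma two_mult_choose_two: "2 * int (a choose 2) = int a * (int a - 1)"
proof -
  have "even (a * (a - 1))" by (cases "even a") auto
  then have "2 * (a choose 2) = a * (a - 1)" by (simp add: choose_two)
  then show ?thesis by (cases a) (simp_all add: algebra_simps flip: of_nat_mult)
qed

text \<open>The summand \<open>(s - t)(s - t + 1)\<close> is twice the excess of \<open>s choose 2\<close> over its
  chord through \<open>s = t - 1\<close> and \<open>s = t\<close>.\<close>
lemma sum_two_mult_choose_two:
  fixes a :: "nat \<Rightarrow> nat" and t :: int
  shows "2 * (\<Sum>i<k. int (a i choose 2))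
           = (t - 1) * (2 * int (\<Sum>i<k. a i)) - int k * t * (t - 1)
             + (\<Sum>i<k. (int (a i) - t) * (int (a i) - t + 1))"
proof -
  have "2 * (\<Sum>i<k. int (a i choose 2))
          = (\<Sum>i<k. (2 * (t - 1) * int (a i) - t * (t - 1))
                     + (int (a i) - t) * (int (a i) - t + 1))"
    by (simp add: sum_distrib_left two_mult_choose_two algebra_simps)
  also have "\<dots> = (t - 1) * (2 * int (\<Sum>i<k. a i)) - int k * t * (t - 1)
                   + (\<Sum>i<k. (int (a i) - t) * (int (a i) - t + 1))"
    by (simp add: sum.distrib sum_subtractf sum_distrib_left algebra_simps)
  finally show ?thesis .
qed

lemma int_mult_succ_nonneg: "0 \<le> (x::int) * (x + 1)"
  by (cases "x \<ge> 0") (simp_all add: mult_nonpos_nonpos)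

lemma ceiling_divide_bounds:
  assumes "k \<ge> 1"
  shows "int k * (\<lceil>real n / real k\<rceil> - 1) < int n" and "int n \<le> int k * \<lceil>real n / real k\<rceil>"
proof -
  have k: "real k > 0" using assms by simp
  have "real_of_int (int k * (\<lceil>real n / real k\<rceil> - 1)) < real n"
    using ceiling_correct[of "real n / real k"] k by (simp add: less_divide_eq mult.commute)
  then show "int k * (\<lceil>real n / real k\<rceil> - 1) < int n" by linarith
  have "real n / real k \<le> of_int \<lceil>real n / real k\<rceil>" by (rule le_of_int_ceiling)
  then have "real n \<le> real_of_int (int k * \<lceil>real n / real k\<rceil>)"
    by (subst (asm) pos_divide_le_eq[OF k]) (simp add: mult.commute)
  then show "int n \<le> int k * \<lceil>real n / real k\<rceil>" by linarith
qed

lemma balanced_sizes_near_average: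
  fixes a :: "nat \<Rightarrow> nat" and t :: int
  assumes sum: "(\<Sum>j<k. a j) = n" and lower: "int k * (t - 1) < int n" and upper: "int n \<le> int k * t"
    and bal: "\<forall>i<k. \<forall>j<k. a i \<le> a j + 1" and i: "i < k"
  shows "int (a i) = t \<or> int (a i) = t - 1"
proof (rule ccontr)
  have sum_int: "(\<Sum>j<k. int (a j)) = int n" using sum by (simp flip: of_nat_sum)
  assume "\<not> ?thesis"
  then consider "int (a i) \<ge> t + 1" | "int (a i) \<le> t - 2" by linarith
  then show False
  proof cases
    case 1
    with bal i have "\<forall>j<k. int (a j) - t \<ge> 0" by force
    then have "int (a i) - t \<le> (\<Sum>j<k. int (a j) - t)"
      using i by (intro member_le_sum) auto
    also have "\<dots> = int n - int k * t" by (simp add: sum_subtractf sum_int)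
    finally show False using 1 upper by linarith
  next
    case 2
    with bal i have "\<forall>j<k. t - 1 - int (a j) \<ge> 0" by force
    then have "t - 1 - int (a i) \<le> (\<Sum>j<k. t - 1 - int (a j))"
      using i by (intro member_le_sum) auto
    also have "\<dots> = int k * (t - 1) - int n" by (simp add: sum_subtractf sum_int)
    finally show False using 2 lower by linarith
  qed
qed

lemma sum_excess_eq_0_iff_balanced:
  fixes a :: "nat \<Rightarrow> nat" and t :: int
  assumes "(\<Sum>j<k. a j) = n" "int k * (t - 1) < int n" "int n \<le> int k * t"
  shows "(\<Sum>i<k. (int (a i) - t) * (int (a i) - t + 1)) = 0 \<longleftrightarrow> (\<forall>i<k. \<forall>j<k. a i \<le> a j + 1)"
proof -
  have "(\<Sum>i<k. (int (a i) - t) * (int (a i) - t + 1)) = 0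
          \<longleftrightarrow> (\<forall>i\<in>{..<k}. (int (a i) - t) * (int (a i) - t + 1) = 0)"
    by (simp add: sum_nonneg_eq_0_iff int_mult_succ_nonneg)
  also have "\<dots> \<longleftrightarrow> (\<forall>i\<in>{..<k}. int (a i) = t \<or> int (a i) = t - 1)"
    by (intro ball_cong refl) (subst mult_eq_0_iff, arith)
  also have "\<dots> \<longleftrightarrow> (\<forall>i<k. \<forall>j<k. a i \<le> a j + 1)"
  proof
    assume "\<forall>i\<in>{..<k}. int (a i) = t \<or> int (a i) = t - 1"
    then show "\<forall>i<k. \<forall>j<k. a i \<le> a j + 1"
      by (smt (verit) lessThan_iff of_nat_le_iff of_nat_add of_nat_1)
  next
    assume "\<forall>i<k. \<forall>j<k. a i \<le> a j + 1"
    then show "\<forall>i\<in>{..<k}. int (a i) = t \<or> int (a i) = t - 1"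
      using balanced_sizes_near_average[OF assms] by blast
  qed
  finally show ?thesis .
qed

lemma double_turan_non_edges_eq_iff:
  fixes c :: "'a \<Rightarrow> nat"
  assumes G: "simple_graph V E" and P: "proper_colouring V E k c" and k: "k \<ge> 1"
  shows "double_turan_non_edges (card V) k = 2 * int (card (non_edges V E))
           \<longleftrightarrow> balanced_colouring V k c \<and> non_adjacent_same_colour V E c"
proof -
  define t where "t = \<lceil>real (card V) / real k\<rceil>"
  define s where "s i = card {v\<in>V. c v = i}" for i
  define W where "W = {{x, y} | x y. x \<in> V \<and> y \<in> V \<and> x \<noteq> y \<and> c x = c y}"
  define excess where "excess = (\<Sum>i<k. (int (s i) - t) * (int (s i) - t + 1))"
  have fin: "finite V" and colours: "\<forall>v\<in>V. c v < k"
    using G P by (simp_all add: simple_graph_def proper_colouring_def)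
  have sum_s: "(\<Sum>i<k. s i) = card V"
    unfolding s_def by (rule sum_card_colour_classes[OF fin colours])
  have card_W: "card W = (\<Sum>i<k. s i choose 2)"
    unfolding W_def s_def by (rule card_same_colour_pairs[OF fin colours])
  have W_NE: "W \<subseteq> non_edges V E"
    using P unfolding W_def non_edges_def proper_colouring_def by blast
  have fin_NE: "finite (non_edges V E)"
    using fin by (auto simp: non_edges_def intro: finite_subset[of _ "Pow V"])
  have "2 * int (card W) = double_turan_non_edges (card V) k + excess"
    using sum_two_mult_choose_two[of s k t]
    by (simp add: card_W sum_s excess_def double_turan_non_edges_def t_def Let_def)
  moreover have "excess \<ge> 0"
    unfolding excess_def by (intro sum_nonneg) (simp add: int_mult_succ_nonneg)
  moreover have "card W \<le> card (non_edges V E)" by (rule card_mono[OF fin_NE W_NE])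
  moreover have "excess = 0 \<longleftrightarrow> balanced_colouring V k c"
    using sum_excess_eq_0_iff_balanced[OF sum_s ceiling_divide_bounds[OF k]]
    unfolding excess_def s_def t_def balanced_colouring_def by simp
  moreover have "card W = card (non_edges V E) \<longleftrightarrow> non_adjacent_same_colour V E c"
  proof -
    have "card W = card (non_edges V E) \<longleftrightarrow> non_edges V E \<subseteq> W"
      using card_subset_eq[OF fin_NE W_NE] W_NE by auto
    also have "\<dots> \<longleftrightarrow> non_adjacent_same_colour V E c"
      unfolding non_adjacent_same_colour_def
    proof (intro iffI ballI impI)
      fix x y assume "non_edges V E \<subseteq> W" "x \<in> V" "y \<in> V" "x \<noteq> y" "\<not> E x y"
      then have "{x, y} \<in> W" unfolding non_edges_def by blast
      then obtain x' y' where "{x, y} = {x', y'}" "c x' = c y'" unfolding W_def by blast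
      then show "c x = c y" by (auto simp: doubleton_eq_iff)
    next
      assume "\<forall>x\<in>V. \<forall>y\<in>V. x \<noteq> y \<longrightarrow> \<not> E x y \<longrightarrow> c x = c y"
      then show "non_edges V E \<subseteq> W" unfolding non_edges_def W_def by blast
    qed
    finally show ?thesis .
  qed
  ultimately show ?thesis by linarith
qed

lemma turan_formula_iff_double_turan_non_edges:
  "(let n = real N; \<chi> = real k in
      of_int \<lceil>n / \<chi>\<rceil> * (n - \<chi> / 2 * of_int \<lceil>n / \<chi> - 1\<rceil>) = n + real m)
     \<longleftrightarrow> double_turan_non_edges N k = 2 * int m"
proof -
  define t where "t = \<lceil>real N / real k\<rceil>"
  have "\<lceil>real N / real k - 1\<rceil> = t - 1" unfolding t_def by simp
  moreover have "of_int t * (real N - real k / 2 * of_int (t - 1)) = real N + real m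
      \<longleftrightarrow> real_of_int ((t - 1) * (2 * int N) - int k * t * (t - 1)) = real_of_int (2 * int m)"
    by (simp add: field_simps)
  ultimately show ?thesis
    unfolding double_turan_non_edges_def Let_def t_def of_int_eq_iff by simp
qed

lemma chromatic_number_colouring:
  assumes "simple_graph V E"
  shows "\<exists>d. proper_colouring V E (chromatic_number V E) d"
proof -
  have fin: "finite V" using assms by (simp add: simple_graph_def)
  obtain f where f: "bij_betw f V {..<card V}" using ex_bij_betw_finite_nat[OF fin]
    by (auto simp: atLeast0LessThan)
  have "proper_colouring V E (card V) f"
    using f assms bij_betw_apply[OF f]
    unfolding proper_colouring_def simple_graph_def bij_betw_def inj_on_def by blast
  then have "\<exists>k. Ex (proper_colouring V E k)" by blast
  then show ?thesis unfolding chromatic_number_def by (rule LeastI_ex)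
qed

lemma chromatic_number_le: "proper_colouring V E k c \<Longrightarrow> chromatic_number V E \<le> k"
  unfolding chromatic_number_def by (rule Least_le) blast

lemma chromatic_number_pos:
  assumes "simple_graph V E" "V \<noteq> {}"
  shows "chromatic_number V E \<ge> 1"
  using chromatic_number_colouring[OF assms(1)] assms(2)
  unfolding proper_colouring_def by fastforce

lemma card_clique_le_chromatic_number:
  assumes G: "simple_graph V E" and "K \<subseteq> V" and clique: "\<forall>x\<in>K. \<forall>y\<in>K. x \<noteq> y \<longrightarrow> E x y"
  shows "card K \<le> chromatic_number V E"
proof -
  obtain d where d: "proper_colouring V E (chromatic_number V E) d"
    using chromatic_number_colouring[OF G] by blast
  have "inj_on d K" "d ` K \<subseteq> {..<chromatic_number V E}"
    using d \<open>K \<subseteq> V\<close> clique unfolding proper_colouring_def inj_on_def by blast+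
  then show ?thesis using card_inj_on_le[of d K "{..<chromatic_number V E}"] by simp
qed

lemma chromatic_number_complete_multipartite:
  assumes G: "simple_graph V E" and P: "proper_colouring V E r c"
    and complete: "non_adjacent_same_colour V E c" and surj: "{..<r} \<subseteq> c ` V"
  shows "chromatic_number V E = r"
proof (rule antisym)
  show "chromatic_number V E \<le> r" by (rule chromatic_number_le[OF P])
  obtain rep where rep: "\<And>i. i < r \<Longrightarrow> rep i \<in> V \<and> c (rep i) = i"
    using surj by (metis image_iff lessThan_iff subset_eq)
  have "inj_on rep {..<r}" by (rule inj_on_inverseI[of _ c]) (use rep in auto)
  then have "card (rep ` {..<r}) = r" by (simp add: card_image)
  moreover have "\<forall>x\<in>rep ` {..<r}. \<forall>y\<in>rep ` {..<r}. x \<noteq> y \<longrightarrow> E x y"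
    using rep complete unfolding non_adjacent_same_colour_def by fastforce
  then have "card (rep ` {..<r}) \<le> chromatic_number V E"
    using rep by (intro card_clique_le_chromatic_number[OF G]) auto
  ultimately show "r \<le> chromatic_number V E" by simp
qed

lemma balanced_colouring_inj_on_or_surj:
  assumes fin: "finite V" and colours: "\<forall>v\<in>V. c v < r" and bal: "balanced_colouring V r c"
  shows "inj_on c V \<or> {..<r} \<subseteq> c ` V"
proof (rule disjCI)
  assume "\<not> {..<r} \<subseteq> c ` V"
  then obtain i where i: "i < r" "{v\<in>V. c v = i} = {}" by auto
  have small: "card {v\<in>V. c v = j} \<le> Suc 0" if "j < r" for j
  proof -
    have "card {v\<in>V. c v = j} \<le> card {v\<in>V. c v = i} + 1"
      using bal that i(1) unfolding balanced_colouring_def by blast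
    then show ?thesis using i(2) by simp
  qed
  show "inj_on c V"
  proof (rule inj_onI)
    fix x y assume "x \<in> V" "y \<in> V" "c x = c y"
    moreover have "card {v\<in>V. c v = c x} \<le> Suc 0" using small colours \<open>x \<in> V\<close> by blast
    ultimately show "x = y" using fin by (auto simp: card_le_Suc0_iff_eq)
  qed
qed

lemma double_turan_non_edges_eq_0:
  assumes "1 \<le> n" "n \<le> k"
  shows "double_turan_non_edges n k = 0"
proof -
  have "\<lceil>real n / real k\<rceil> = 1"
    using assms by (intro ceiling_unique) (simp_all add: divide_le_eq_1)
  then show ?thesis by (simp add: double_turan_non_edges_def)
qed

lemma turan_graph_double_non_edges:
  assumes G: "simple_graph V E" and T: "turan_graph V E" and ne: "V \<noteq> {}"
  shows "double_turan_non_edges (card V) (chromatic_number V E) = 2 * int (card (non_edges V E))"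
proof -
  obtain r c where r: "r \<ge> 1" and P: "proper_colouring V E r c"
    and bal: "balanced_colouring V r c" and complete: "non_adjacent_same_colour V E c"
    using T turan_graph_iff_balanced_multipartite[OF G] by blast
  have fin: "finite V" using G by (simp add: simple_graph_def)
  have colours: "\<forall>v\<in>V. c v < r" using P by (simp add: proper_colouring_def)
  consider "{..<r} \<subseteq> c ` V" | "inj_on c V"
    using balanced_colouring_inj_on_or_surj[OF fin colours bal] by blast
  then show ?thesis
  proof cases
    case 1
    then have "chromatic_number V E = r"
      by (rule chromatic_number_complete_multipartite[OF G P complete])
    then show ?thesis using double_turan_non_edges_eq_iff[OF G P r] bal complete by simp
  next
    case 2
    then have clique: "\<forall>x\<in>V. \<forall>y\<in>V. x \<noteq> y \<longrightarrow> E x y"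
      using complete unfolding non_adjacent_same_colour_def inj_on_def by blast
    then have "non_edges V E = {}" by (auto simp: non_edges_def)
    moreover have "card V \<le> chromatic_number V E"
      using card_clique_le_chromatic_number[OF G subset_refl clique] .
    moreover have "1 \<le> card V" using fin ne by (simp add: Suc_le_eq card_gt_0_iff)
    ultimately show ?thesis by (simp add: double_turan_non_edges_eq_0)
  qed
qed

theorem theorem1p2:
  fixes V :: "'a set" and E :: "'a \<Rightarrow> 'a \<Rightarrow> bool"
  assumes "simple_graph V E" and "card V \<ge> 1"
  shows "(let n = real (card V); \<chi> = real (chromatic_number V E) in
           of_int \<lceil>n / \<chi>\<rceil> * (n - \<chi> / 2 * of_int \<lceil>n / \<chi> - 1\<rceil>)
             = n + real (card (non_edges V E)))
         \<longleftrightarrow> turan_graph V E"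
  unfolding turan_formula_iff_double_turan_non_edges
proof
  have ne: "V \<noteq> {}" using assms(2) by auto
  then have chi: "chromatic_number V E \<ge> 1" by (rule chromatic_number_pos[OF assms(1)])
  obtain d where d: "proper_colouring V E (chromatic_number V E) d"
    using chromatic_number_colouring[OF assms(1)] by blast
  assume "double_turan_non_edges (card V) (chromatic_number V E) = 2 * int (card (non_edges V E))"
  then have "balanced_colouring V (chromatic_number V E) d \<and> non_adjacent_same_colour V E d"
    using double_turan_non_edges_eq_iff[OF assms(1) d chi] by blast
  then show "turan_graph V E"
    using turan_graph_iff_balanced_multipartite[OF assms(1)] d chi by blast
next
  show "turan_graph V E \<Longrightarrow> double_turan_non_edges (card V) (chromatic_number V E)
          = 2 * int (card (non_edges V E))"
    using turan_graph_double_non_edges[OF assms(1)] assms(2) by force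
qed

end
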